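(* Let $F,F',G,G'$ be graphs, all with the same vertex set contained in $\{v_1,\ldots,v_n\}$, such that $F\cong F'$, $|E(G)|=|E(G')|$ and $E(F)\cap E(G)=E(F')\cap E(G')=\emptyset$. Then $$\pi\big(F\cup G,\mathfrak C(F,G)\big)=\pi\big(F'\cup G',\mathfrak C(F',G')\big),$$ where $\mathfrak C(F,G)$ denotes the set of all clique covers $\mathcal C$ of $F\cup G$ with $E(G)\subseteq\mathcal C\subseteq\mathcal P(F\cup G)\setminus E(F)$ (edges being regarded as $2$-element vertex sets), and similarly for $\mathfrak C(F',G')$.
   Context: Random intersection graph $\mathcal G(n,m,p)$: vertices $v_1,\ldots,v_n$, attributes $a_1,\ldots,a_m$; each vertex chooses each attribute independently with probability $p$; two vertices are adjacent iff they chose a common attribute. For a graph $H$, $\mathcal P(H)$ is the family of subsets of $V(H)$ containing both ends of at least one edge of $H$. $\mathcal C\subseteq\mathcal P(H)$ is a clique cover of $H$ if every edge of $H$ is contained in some $C\in\mathcal C$. An attribute builds $C\subseteq V(H)$ if all vertices of $C$ and no vertex of $V(H)\setminus C$ chose it. $H$ is given by the clique cover $\mathcal C$ if every $C\in\mathcal C$ is built by some attribute and no $C\in\mathcal P(H)\setminus\mathcal C$ is built by any attribute; $\pi(H,\mathcal C)$ is its probability, and for a family $\mathfrak C$ of clique covers $\pi(H,\mathfrak C)=\sum_{\mathcal C\in\mathfrak C}\pi(H,\mathcal C)$. $F\cup G$ is the graph with vertex set $V(F)\cup V(G)$ and edge set $E(F)\cup E(G)$. *)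

theory Defs
  imports "HOL-Probability.Probability"
begin

(* A graph is a pair (V, E): V a vertex set, E a set of 2-element subsets of V.
   Vertices v_1..v_n are the naturals 1..n, attributes a_1..a_m are 1..m. *)
type_synonym graph = "nat set \<times> nat set set"

definition verts :: "graph \<Rightarrow> nat set" where "verts H = fst H"
definition edges :: "graph \<Rightarrow> nat set set" where "edges H = snd H"

definition is_graph :: "nat \<Rightarrow> graph \<Rightarrow> bool" where
  "is_graph n H \<longleftrightarrow> verts H \<subseteq> {1..n} \<and>
     (\<forall>e\<in>edges H. e \<subseteq> verts H \<and> card e = 2)"

definition graph_union :: "graph \<Rightarrow> graph \<Rightarrow> graph" where
  "graph_union F G = (verts F \<union> verts G, edges F \<union> edges G)"

definition graph_iso :: "graph \<Rightarrow> graph \<Rightarrow> bool" where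
  "graph_iso F F' \<longleftrightarrow> (\<exists>f. bij_betw f (verts F) (verts F') \<and>
     (\<forall>e. e \<subseteq> verts F \<longrightarrow> (e \<in> edges F \<longleftrightarrow> f ` e \<in> edges F')))"

definition PH :: "graph \<Rightarrow> nat set set" where
  "PH H = {S. S \<subseteq> verts H \<and> (\<exists>e\<in>edges H. e \<subseteq> S)}"

definition clique_cover :: "graph \<Rightarrow> nat set set \<Rightarrow> bool" where
  "clique_cover H \<C> \<longleftrightarrow> \<C> \<subseteq> PH H \<and> (\<forall>e\<in>edges H. \<exists>C\<in>\<C>. e \<subseteq> C)"

(* The random choices: R (v, a) = True iff vertex v chose attribute a.
   Each pair (v,a), v \<in> {1..n}, a \<in> {1..m}, independently with probability p. *)
definition RIG :: "nat \<Rightarrow> nat \<Rightarrow> real \<Rightarrow> (nat \<times> nat \<Rightarrow> bool) pmf" where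
  "RIG n m p = Pi_pmf ({1..n} \<times> {1..m}) False (\<lambda>_. bernoulli_pmf p)"

definition builds :: "(nat \<times> nat \<Rightarrow> bool) \<Rightarrow> graph \<Rightarrow> nat \<Rightarrow> nat set \<Rightarrow> bool" where
  "builds R H a C \<longleftrightarrow> (\<forall>v\<in>C. R (v, a)) \<and> (\<forall>v\<in>verts H - C. \<not> R (v, a))"

definition given_by :: "nat \<Rightarrow> (nat \<times> nat \<Rightarrow> bool) \<Rightarrow> graph \<Rightarrow> nat set set \<Rightarrow> bool" where
  "given_by m R H \<C> \<longleftrightarrow>
     (\<forall>C\<in>\<C>. \<exists>a\<in>{1..m}. builds R H a C) \<and>
     (\<forall>C\<in>PH H - \<C>. \<not> (\<exists>a\<in>{1..m}. builds R H a C))"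

definition pi_cc :: "nat \<Rightarrow> nat \<Rightarrow> real \<Rightarrow> graph \<Rightarrow> nat set set \<Rightarrow> real" where
  "pi_cc n m p H \<C> = measure_pmf.prob (RIG n m p) {R. given_by m R H \<C>}"

definition pi_fam :: "nat \<Rightarrow> nat \<Rightarrow> real \<Rightarrow> graph \<Rightarrow> nat set set set \<Rightarrow> real" where
  "pi_fam n m p H \<CC> = (\<Sum>\<C>\<in>\<CC>. pi_cc n m p H \<C>)"

definition CFG :: "graph \<Rightarrow> graph \<Rightarrow> nat set set set" where
  "CFG F G = {\<C>. clique_cover (graph_union F G) \<C> \<and> edges G \<subseteq> \<C> \<and>
                 \<C> \<subseteq> PH (graph_union F G) - edges F}"

end

(*
  Summing over the covers in the family C(F,G), the event is that the sets built by the attributes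
  contain every edge of G, contain no edge of F, and each edge of F lies strictly inside one of them.
  So the probability only depends on the family T of vertex sets of the attributes, through
  E(F) and E(G).  Take an isomorphism f of F onto F' and a permutation tau of the 2-subsets of V
  that maps E(F) onto E(F') and E(G) onto E(G').  Relabel every attribute's vertex set S as tau S
  when |S| = 2 and as f(S) otherwise.  This is a size-preserving permutation of the subsets of V,
  and the weight p^|S| (1-p)^(|V|-|S|) of a column only depends on |S|, so the relabelling
  preserves the law of the random intersection graph.  It also turns the event for (F,G) into
  the event for (F',G').
*)
theory Submission
  imports Defs "HOL-Library.Ramsey"
begin

lemma verts_graph_union [simp]: "verts (graph_union F G) = verts F \<union> verts G"
  and edges_graph_union [simp]: "edges (graph_union F G) = edges F \<union> edges G"
  unfolding graph_union_def verts_def edges_def by simp_all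

lemma in_nsets_2_iff: "U \<in> [V]\<^bsup>2\<^esup> \<longleftrightarrow> U \<subseteq> V \<and> card U = 2"
  unfolding nsets_def using card_ge_0_finite[of U] by auto

lemma is_graph_edges_nsets: "is_graph n H \<Longrightarrow> edges H \<subseteq> [verts H]\<^bsup>2\<^esup>"
  unfolding is_graph_def by (auto simp: in_nsets_2_iff)

lemma graph_iso_edges_image:
  assumes "graph_iso F F'" "is_graph n F" "is_graph n F'"
  obtains f where "bij_betw f (verts F) (verts F')" "(\<lambda>e. f ` e) ` edges F = edges F'"
proof -
  obtain f where f: "bij_betw f (verts F) (verts F')"
    and iso: "\<forall>e. e \<subseteq> verts F \<longrightarrow> (e \<in> edges F \<longleftrightarrow> f ` e \<in> edges F')"
    using assms(1) unfolding graph_iso_def by blast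
  have edges_F: "e \<subseteq> verts F" if "e \<in> edges F" for e
    using assms(2) that unfolding is_graph_def by blast
  have edges_F': "e' \<subseteq> f ` verts F" if "e' \<in> edges F'" for e'
    using assms(3) that f unfolding is_graph_def bij_betw_def by simp
  have "(\<lambda>e. f ` e) ` edges F = edges F'"
  proof (intro equalityI subsetI)
    fix e' assume "e' \<in> (\<lambda>e. f ` e) ` edges F"
    then obtain e where e: "e \<in> edges F" "e' = f ` e"
      by blast
    then show "e' \<in> edges F'"
      using iso[rule_format, OF edges_F[OF e(1)]] by simp
  next
    fix e' assume e': "e' \<in> edges F'"
    then obtain e where e: "e \<subseteq> verts F" "e' = f ` e"
      using edges_F'[OF e'] unfolding subset_image_iff by blast
    then have "e \<in> edges F"
      using iso[rule_format, OF e(1)] e' by simp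
    then show "e' \<in> (\<lambda>e. f ` e) ` edges F"
      using e(2) by blast
  qed
  with f show thesis
    by (rule that)
qed

lemma graph_iso_card_edges:
  assumes "graph_iso F F'" "is_graph n F" "is_graph n F'"
  shows "card (edges F) = card (edges F')"
proof -
  obtain f where f: "bij_betw f (verts F) (verts F')" and f_edges: "(\<lambda>e. f ` e) ` edges F = edges F'"
    by (rule graph_iso_edges_image[OF assms])
  have "edges F \<subseteq> Pow (verts F)"
    using assms(2) unfolding is_graph_def by blast
  then have "inj_on (\<lambda>e. f ` e) (edges F)"
    by (rule inj_on_subset[OF inj_on_image_Pow[OF bij_betw_imp_inj_on[OF f]]])
  then show ?thesis
    using f_edges card_image by fastforce
qed

definition attr_set :: "nat set \<Rightarrow> (nat \<times> nat \<Rightarrow> bool) \<Rightarrow> nat \<Rightarrow> nat set" where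
  "attr_set V R a = {v \<in> V. R (v, a)}"

definition built_sets :: "nat \<Rightarrow> (nat \<times> nat \<Rightarrow> bool) \<Rightarrow> graph \<Rightarrow> nat set set" where
  "built_sets m R H = PH H \<inter> attr_set (verts H) R ` {1..m}"

lemma builds_iff_attr_set_eq:
  "S \<subseteq> verts H \<Longrightarrow> builds R H a S \<longleftrightarrow> attr_set (verts H) R a = S"
  unfolding builds_def attr_set_def by auto

lemma given_by_iff_eq_built_sets:
  assumes "\<C> \<subseteq> PH H"
  shows "given_by m R H \<C> \<longleftrightarrow> \<C> = built_sets m R H"
proof -
  have "PH H \<subseteq> Pow (verts H)"
    unfolding PH_def by auto
  then have "\<And>S. S \<in> PH H \<Longrightarrow> (\<exists>a\<in>{1..m}. builds R H a S) \<longleftrightarrow> S \<in> attr_set (verts H) R ` {1..m}"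
    using builds_iff_attr_set_eq by blast
  then show ?thesis
    using assms unfolding given_by_def built_sets_def by blast
qed

lemma pi_fam_eq_prob_built_sets:
  assumes "finite \<CC>" "\<forall>\<C>\<in>\<CC>. \<C> \<subseteq> PH H"
  shows "pi_fam n m p H \<CC> = measure_pmf.prob (RIG n m p) {R. built_sets m R H \<in> \<CC>}"
proof -
  have given_by: "\<And>\<C> R. \<C> \<in> \<CC> \<Longrightarrow> given_by m R H \<C> \<longleftrightarrow> \<C> = built_sets m R H"
    using assms(2) given_by_iff_eq_built_sets by blast
  have "pi_fam n m p H \<CC> = measure_pmf.prob (RIG n m p) (\<Union>\<C>\<in>\<CC>. {R. given_by m R H \<C>})"
    unfolding pi_fam_def pi_cc_def
    by (rule measure_pmf.finite_measure_finite_Union[symmetric])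
       (use assms(1) given_by in \<open>auto simp: disjoint_family_on_def\<close>)
  also have "(\<Union>\<C>\<in>\<CC>. {R. given_by m R H \<C>}) = {R. built_sets m R H \<in> \<CC>}"
    using given_by by auto
  finally show ?thesis .
qed

lemma covered_iff_strictly_covered:
  assumes G: "EG \<subseteq> \<T>" and F: "\<forall>e\<in>EF. e \<notin> \<T>"
  shows "(\<forall>e\<in>EF \<union> EG. \<exists>T\<in>\<T>. e \<subseteq> T) \<longleftrightarrow> (\<forall>e\<in>EF. \<exists>T\<in>\<T>. e \<subset> T)"
proof
  assume covered: "\<forall>e\<in>EF \<union> EG. \<exists>T\<in>\<T>. e \<subseteq> T"
  show "\<forall>e\<in>EF. \<exists>T\<in>\<T>. e \<subset> T"
  proof
    fix e assume e: "e \<in> EF"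
    then obtain T where "T \<in> \<T>" "e \<subseteq> T"
      using covered by blast
    moreover have "e \<noteq> T"
      using \<open>T \<in> \<T>\<close> e F by blast
    ultimately show "\<exists>T\<in>\<T>. e \<subset> T"
      by blast
  qed
next
  assume "\<forall>e\<in>EF. \<exists>T\<in>\<T>. e \<subset> T"
  then show "\<forall>e\<in>EF \<union> EG. \<exists>T\<in>\<T>. e \<subseteq> T"
    using G by blast
qed

definition realizes :: "'a set set \<Rightarrow> 'a set set \<Rightarrow> 'a set set \<Rightarrow> bool" where
  "realizes EF EG \<T> \<longleftrightarrow> EG \<subseteq> \<T> \<and> (\<forall>e\<in>EF. e \<notin> \<T>) \<and> (\<forall>e\<in>EF. \<exists>T\<in>\<T>. e \<subset> T)"

lemma PH_Int_in_CFG_iff_realizes: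
  assumes "\<forall>e\<in>edges F \<union> edges G. e \<subseteq> verts F \<union> verts G"
    and "\<T> \<subseteq> Pow (verts F \<union> verts G)"
  shows "PH (graph_union F G) \<inter> \<T> \<in> CFG F G \<longleftrightarrow> realizes (edges F) (edges G) \<T>"
proof -
  let ?H = "graph_union F G"
  let ?\<C> = "PH ?H \<inter> \<T>"
  have edges_PH: "edges F \<union> edges G \<subseteq> PH ?H"
    using assms(1) unfolding PH_def by auto
  have "(\<exists>C\<in>?\<C>. e \<subseteq> C) \<longleftrightarrow> (\<exists>T\<in>\<T>. e \<subseteq> T)" if "e \<in> edges F \<union> edges G" for e
    using assms(2) that unfolding PH_def by auto
  then have "(\<forall>e\<in>edges F \<union> edges G. \<exists>C\<in>?\<C>. e \<subseteq> C) \<longleftrightarrow> (\<forall>e\<in>edges F \<union> edges G. \<exists>T\<in>\<T>. e \<subseteq> T)"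
    by (rule ball_cong[OF refl])
  then have cover_iff: "clique_cover ?H ?\<C> \<longleftrightarrow> (\<forall>e\<in>edges F \<union> edges G. \<exists>T\<in>\<T>. e \<subseteq> T)"
    unfolding clique_cover_def edges_graph_union by (simp only: Int_lower1 simp_thms)
  have G_iff: "edges G \<subseteq> ?\<C> \<longleftrightarrow> edges G \<subseteq> \<T>"
    using edges_PH by blast
  have F_iff: "?\<C> \<subseteq> PH ?H - edges F \<longleftrightarrow> (\<forall>e\<in>edges F. e \<notin> \<T>)"
    using edges_PH by blast
  have "?\<C> \<in> CFG F G \<longleftrightarrow> clique_cover ?H ?\<C> \<and> edges G \<subseteq> ?\<C> \<and> ?\<C> \<subseteq> PH ?H - edges F"
    unfolding CFG_def mem_Collect_eq by (rule refl)
  also have "\<dots> \<longleftrightarrow>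
      (\<forall>e\<in>edges F \<union> edges G. \<exists>T\<in>\<T>. e \<subseteq> T) \<and> edges G \<subseteq> \<T> \<and> (\<forall>e\<in>edges F. e \<notin> \<T>)"
    unfolding cover_iff G_iff F_iff ..
  also have "\<dots> \<longleftrightarrow> realizes (edges F) (edges G) \<T>"
    using covered_iff_strictly_covered[of "edges G" \<T> "edges F"] unfolding realizes_def by argo
  finally show ?thesis .
qed

lemma pi_fam_CFG_eq_prob_realizes:
  assumes "finite (verts F \<union> verts G)"
    and "\<forall>e\<in>edges F \<union> edges G. e \<subseteq> verts F \<union> verts G"
  shows "pi_fam n m p (graph_union F G) (CFG F G) =
    measure_pmf.prob (RIG n m p)
      {R. realizes (edges F) (edges G) (attr_set (verts F \<union> verts G) R ` {1..m})}"
proof -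
  let ?H = "graph_union F G"
  have "CFG F G \<subseteq> Pow (Pow (verts ?H))"
    unfolding CFG_def clique_cover_def PH_def by auto
  then have "finite (CFG F G)"
    by (rule finite_subset) (use assms(1) in simp)
  moreover have "\<forall>\<C>\<in>CFG F G. \<C> \<subseteq> PH ?H"
    unfolding CFG_def by blast
  ultimately have "pi_fam n m p ?H (CFG F G) =
      measure_pmf.prob (RIG n m p) {R. built_sets m R ?H \<in> CFG F G}"
    by (rule pi_fam_eq_prob_built_sets)
  moreover have "attr_set (verts ?H) R ` {1..m} \<subseteq> Pow (verts ?H)" for R
    unfolding attr_set_def by auto
  ultimately show ?thesis
    unfolding built_sets_def using PH_Int_in_CFG_iff_realizes[OF assms(2)] by simp
qed

definition relabel_columns ::
    "nat set \<Rightarrow> (nat set \<Rightarrow> nat set) \<Rightarrow> (nat \<times> nat \<Rightarrow> bool) \<Rightarrow> nat \<times> nat \<Rightarrow> bool" where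
  "relabel_columns V \<Phi> R = (\<lambda>(v, a). if v \<in> V then v \<in> \<Phi> (attr_set V R a) else R (v, a))"

lemma relabel_columns_in: "v \<in> V \<Longrightarrow> relabel_columns V \<Phi> R (v, a) \<longleftrightarrow> v \<in> \<Phi> (attr_set V R a)"
  and relabel_columns_notin: "v \<notin> V \<Longrightarrow> relabel_columns V \<Phi> R (v, a) = R (v, a)"
  unfolding relabel_columns_def by simp_all

lemma attr_set_relabel_columns:
  assumes "\<Phi> (attr_set V R a) \<subseteq> V"
  shows "attr_set V (relabel_columns V \<Phi> R) a = \<Phi> (attr_set V R a)"
  using assms relabel_columns_in[of _ V \<Phi> R a]
  unfolding attr_set_def[of V "relabel_columns V \<Phi> R"] by blast

lemma relabel_columns_inverse:
  assumes "\<forall>S\<subseteq>V. \<Phi> S \<subseteq> V" "\<forall>S\<subseteq>V. \<Phi>' (\<Phi> S) = S"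
  shows "relabel_columns V \<Phi>' (relabel_columns V \<Phi> R) = R"
proof
  fix x :: "nat \<times> nat"
  obtain v a where x: "x = (v, a)"
    by fastforce
  show "relabel_columns V \<Phi>' (relabel_columns V \<Phi> R) x = R x"
  proof (cases "v \<in> V")
    case True
    have "attr_set V R a \<subseteq> V"
      unfolding attr_set_def by blast
    then have "\<Phi>' (attr_set V (relabel_columns V \<Phi> R) a) = attr_set V R a"
      using assms by (simp add: attr_set_relabel_columns)
    then have "relabel_columns V \<Phi>' (relabel_columns V \<Phi> R) (v, a) \<longleftrightarrow> v \<in> attr_set V R a"
      using True by (simp add: relabel_columns_in)
    then show ?thesis
      using True x by (simp add: attr_set_def)
  next
    case False
    then show ?thesis
      using x by (simp add: relabel_columns_notin)
  qed
qed

lemma prod_mem_eq_power_card: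
  fixes g :: "bool \<Rightarrow> 'a::comm_monoid_mult"
  assumes "finite V" "S \<subseteq> V"
  shows "(\<Prod>v\<in>V. g (v \<in> S)) = g True ^ card S * g False ^ card (V - S)"
proof -
  have "(\<Prod>v\<in>V. g (v \<in> S)) = (\<Prod>v\<in>V - S. g (v \<in> S)) * (\<Prod>v\<in>S. g (v \<in> S))"
    by (rule prod.subset_diff[OF assms(2,1)])
  also have "\<dots> = g True ^ card S * g False ^ card (V - S)"
    by (simp add: mult.commute)
  finally show ?thesis .
qed

lemma pmf_RIG:
  "pmf (RIG n m p) R =
    (if \<forall>x. x \<notin> {1..n} \<times> {1..m} \<longrightarrow> \<not> R x
     then \<Prod>a\<in>{1..m}. \<Prod>v\<in>{1..n}. pmf (bernoulli_pmf p) (R (v, a)) else 0)"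
proof -
  have "(\<Prod>x\<in>{1..n} \<times> {1..m}. pmf (bernoulli_pmf p) (R x)) =
      (\<Prod>v\<in>{1..n}. \<Prod>a\<in>{1..m}. pmf (bernoulli_pmf p) (R (v, a)))"
    by (simp add: prod.cartesian_product)
  also have "\<dots> = (\<Prod>a\<in>{1..m}. \<Prod>v\<in>{1..n}. pmf (bernoulli_pmf p) (R (v, a)))"
    by (rule prod.swap)
  finally have product: "(\<Prod>x\<in>{1..n} \<times> {1..m}. pmf (bernoulli_pmf p) (R x)) =
      (\<Prod>a\<in>{1..m}. \<Prod>v\<in>{1..n}. pmf (bernoulli_pmf p) (R (v, a)))" .
  show ?thesis
    unfolding RIG_def by (subst pmf_Pi) (simp_all only: product eq_False finite_SigmaI finite_atLeastAtMost)
qed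

lemma prod_split_attr_set:
  fixes g :: "bool \<Rightarrow> 'a::comm_monoid_mult"
  assumes "V \<subseteq> U" "finite U"
  shows "(\<Prod>v\<in>U. g (Q (v, a))) =
    (\<Prod>v\<in>U - V. g (Q (v, a))) * (g True ^ card (attr_set V Q a) * g False ^ (card V - card (attr_set V Q a)))"
proof -
  have finite_V: "finite V" and attr_set_V: "attr_set V Q a \<subseteq> V"
    using assms finite_subset unfolding attr_set_def by auto
  have "(\<Prod>v\<in>U. g (Q (v, a))) = (\<Prod>v\<in>U - V. g (Q (v, a))) * (\<Prod>v\<in>V. g (Q (v, a)))"
    using assms by (rule prod.subset_diff)
  also have "(\<Prod>v\<in>V. g (Q (v, a))) = (\<Prod>v\<in>V. g (v \<in> attr_set V Q a))"
    by (rule prod.cong) (auto simp: attr_set_def)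
  also have "\<dots> = g True ^ card (attr_set V Q a) * g False ^ card (V - attr_set V Q a)"
    using finite_V attr_set_V by (rule prod_mem_eq_power_card)
  also have "card (V - attr_set V Q a) = card V - card (attr_set V Q a)"
    using finite_V attr_set_V by (meson card_Diff_subset finite_subset)
  finally show ?thesis .
qed

lemma pmf_RIG_relabel_columns:
  assumes V: "V \<subseteq> {1..n}"
    and \<Phi>: "\<forall>S\<subseteq>V. \<Phi> S \<subseteq> V" "\<forall>S\<subseteq>V. card (\<Phi> S) = card S"
  shows "pmf (RIG n m p) (relabel_columns V \<Phi> R) = pmf (RIG n m p) R"
proof -
  let ?R' = "relabel_columns V \<Phi> R" and ?B = "pmf (bernoulli_pmf p)"
  have finite_attr_set: "finite (attr_set V Q a)" for Q a
    using V finite_subset unfolding attr_set_def by fastforce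
  have outside_V: "?R' (v, a) = R (v, a)" if "v \<notin> V" for v a
    using that by (rule relabel_columns_notin)
  have attr_set_V: "attr_set V R a \<subseteq> V" for a
    unfolding attr_set_def by blast
  have card_attr_set: "card (attr_set V ?R' a) = card (attr_set V R a)" for a
    using \<Phi> attr_set_V by (simp add: attr_set_relabel_columns)
  have attr_set_empty_iff: "attr_set V ?R' a = {} \<longleftrightarrow> attr_set V R a = {}" for a
    using card_attr_set[of a] finite_attr_set by (metis card_0_eq)
  have support_iff: "(\<forall>x. x \<notin> {1..n} \<times> {1..m} \<longrightarrow> \<not> Q x) \<longleftrightarrow>
      (\<forall>v a. v \<notin> V \<longrightarrow> (v, a) \<notin> {1..n} \<times> {1..m} \<longrightarrow> \<not> Q (v, a)) \<and>
      (\<forall>a. a \<notin> {1..m} \<longrightarrow> attr_set V Q a = {})" for Q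
    using V unfolding attr_set_def by (auto simp del: atLeastAtMost_iff)
  have support: "(\<forall>x. x \<notin> {1..n} \<times> {1..m} \<longrightarrow> \<not> ?R' x) \<longleftrightarrow>
      (\<forall>x. x \<notin> {1..n} \<times> {1..m} \<longrightarrow> \<not> R x)"
    unfolding support_iff[of ?R'] support_iff[of R] by (simp add: outside_V attr_set_empty_iff)
  have column: "(\<Prod>v\<in>{1..n}. ?B (?R' (v, a))) = (\<Prod>v\<in>{1..n}. ?B (R (v, a)))" for a
    unfolding prod_split_attr_set[OF V finite_atLeastAtMost] card_attr_set
    using outside_V by simp
  show ?thesis
    unfolding pmf_RIG support column ..
qed

lemma map_pmf_relabel_columns_RIG:
  assumes V: "V \<subseteq> {1..n}"
    and \<Phi>: "bij_betw \<Phi> (Pow V) (Pow V)" "\<forall>S\<subseteq>V. card (\<Phi> S) = card S"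
  shows "map_pmf (relabel_columns V \<Phi>) (RIG n m p) = RIG n m p"
proof -
  define \<Phi>' where "\<Phi>' = inv_into (Pow V) \<Phi>"
  have \<Phi>_into: "\<forall>S\<subseteq>V. \<Phi> S \<subseteq> V" and \<Phi>'_into: "\<forall>S\<subseteq>V. \<Phi>' S \<subseteq> V"
    using \<Phi>(1) bij_betw_inv_into[OF \<Phi>(1)] unfolding \<Phi>'_def bij_betw_def by auto
  have \<Phi>'_\<Phi>: "\<forall>S\<subseteq>V. \<Phi>' (\<Phi> S) = S" and \<Phi>_\<Phi>': "\<forall>S\<subseteq>V. \<Phi> (\<Phi>' S) = S"
    using \<Phi>(1) unfolding \<Phi>'_def bij_betw_def by (auto simp: f_inv_into_f)
  let ?\<Psi> = "relabel_columns V \<Phi>" and ?\<Psi>' = "relabel_columns V \<Phi>'"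
  have "inj ?\<Psi>"
    by (rule inj_on_inverseI[where g = ?\<Psi>']) (rule relabel_columns_inverse[OF \<Phi>_into \<Phi>'_\<Phi>])
  show ?thesis
  proof (rule pmf_eqI)
    fix R
    have R: "?\<Psi> (?\<Psi>' R) = R"
      by (rule relabel_columns_inverse[OF \<Phi>'_into \<Phi>_\<Phi>'])
    have "pmf (map_pmf ?\<Psi> (RIG n m p)) (?\<Psi> (?\<Psi>' R)) = pmf (RIG n m p) (?\<Psi> (?\<Psi>' R))"
      unfolding pmf_map_inj'[OF \<open>inj ?\<Psi>\<close>] pmf_RIG_relabel_columns[OF V \<Phi>_into \<Phi>(2)] ..
    then show "pmf (map_pmf ?\<Psi> (RIG n m p)) R = pmf (RIG n m p) R"
      unfolding R .
  qed
qed

text \<open>2-sets are moved by \<open>\<tau>\<close>, which carries E(F) and E(G) along together; all other sets are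
  moved by the vertex isomorphism \<open>f\<close>, so a strict superset of an edge of F becomes a strict
  superset of an edge of F'.\<close>

definition edge_relabel :: "('a set \<Rightarrow> 'a set) \<Rightarrow> ('a \<Rightarrow> 'a) \<Rightarrow> 'a set \<Rightarrow> 'a set" where
  "edge_relabel \<tau> f S = (if card S = 2 then \<tau> S else f ` S)"

lemma card_edge_relabel:
  assumes "inj_on f V" "\<tau> ` [V]\<^bsup>2\<^esup> \<subseteq> [V]\<^bsup>2\<^esup>" "S \<subseteq> V"
  shows "card (edge_relabel \<tau> f S) = card S"
proof (cases "card S = 2")
  case True
  then have "\<tau> S \<in> [V]\<^bsup>2\<^esup>"
    using assms(2,3) in_nsets_2_iff by blast
  then show ?thesis
    using True unfolding edge_relabel_def by (simp add: in_nsets_2_iff)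
next
  case False
  then show ?thesis
    using assms(1,3) unfolding edge_relabel_def by (simp add: card_image inj_on_subset)
qed

lemma inj_on_edge_relabel:
  assumes "inj_on f V" "inj_on \<tau> ([V]\<^bsup>2\<^esup>)" "\<tau> ` [V]\<^bsup>2\<^esup> \<subseteq> [V]\<^bsup>2\<^esup>"
  shows "inj_on (edge_relabel \<tau> f) (Pow V)"
proof (rule inj_onI)
  fix S T assume S: "S \<in> Pow V" and T: "T \<in> Pow V"
    and eq: "edge_relabel \<tau> f S = edge_relabel \<tau> f T"
  have "card S = card (edge_relabel \<tau> f S)"
    using card_edge_relabel[OF assms(1,3)] S by simp
  also have "\<dots> = card T"
    using eq card_edge_relabel[OF assms(1,3)] T by simp
  finally have card: "card S = card T" .
  show "S = T"
  proof (cases "card S = 2")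
    case True
    then have "S \<in> [V]\<^bsup>2\<^esup>" "T \<in> [V]\<^bsup>2\<^esup>"
      using S T card in_nsets_2_iff by auto
    moreover have "\<tau> S = \<tau> T"
      using eq True card unfolding edge_relabel_def by simp
    ultimately show ?thesis
      using inj_onD[OF assms(2)] by blast
  next
    case False
    then have "f ` S = f ` T"
      using eq card unfolding edge_relabel_def by simp
    then show ?thesis
      using inj_on_image_eq_iff[OF assms(1)] S T by blast
  qed
qed

lemma bij_betw_edge_relabel:
  assumes "finite V" "bij_betw f V V" "bij_betw \<tau> ([V]\<^bsup>2\<^esup>) ([V]\<^bsup>2\<^esup>)"
  shows "bij_betw (edge_relabel \<tau> f) (Pow V) (Pow V)"
proof -
  have f: "inj_on f V" "f ` V = V" and \<tau>: "inj_on \<tau> ([V]\<^bsup>2\<^esup>)" "\<tau> ` [V]\<^bsup>2\<^esup> = [V]\<^bsup>2\<^esup>"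
    using assms(2,3) unfolding bij_betw_def by auto
  have "edge_relabel \<tau> f S \<subseteq> V" if "S \<subseteq> V" for S
  proof (cases "card S = 2")
    case True
    then have "\<tau> S \<in> [V]\<^bsup>2\<^esup>"
      using that \<tau>(2) in_nsets_2_iff by blast
    then show ?thesis
      using True unfolding edge_relabel_def by (simp add: in_nsets_2_iff)
  next
    case False
    then show ?thesis
      using that f(2) unfolding edge_relabel_def by auto
  qed
  then have into: "edge_relabel \<tau> f ` Pow V \<subseteq> Pow V"
    by blast
  have "inj_on (edge_relabel \<tau> f) (Pow V)"
    using f(1) \<tau> by (simp add: inj_on_edge_relabel)
  then show ?thesis
    using endo_inj_surj[OF _ into] assms(1) unfolding bij_betw_def by simp
qed

lemma psubset_iff_image_psubset_edge_relabel:
  assumes f: "inj_on f V" and \<tau>: "\<tau> ` [V]\<^bsup>2\<^esup> \<subseteq> [V]\<^bsup>2\<^esup>"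
    and e: "e \<subseteq> V" "card e = 2" and T: "T \<subseteq> V"
  shows "e \<subset> T \<longleftrightarrow> f ` e \<subset> edge_relabel \<tau> f T"
proof (cases "card T = 2")
  case True
  have "card (f ` e) = 2"
    using e inj_on_subset[OF f e(1)] by (simp add: card_image)
  moreover have "card (edge_relabel \<tau> f T) = 2"
    using card_edge_relabel[OF f \<tau> T] True by simp
  ultimately have "\<not> f ` e \<subset> edge_relabel \<tau> f T" and "\<not> e \<subset> T"
    using True e(2) psubset_card_mono card_ge_0_finite by (metis less_irrefl zero_less_numeral)+
  then show ?thesis
    by blast
next
  case False
  then have "edge_relabel \<tau> f T = f ` T"
    unfolding edge_relabel_def by simp
  then show ?thesis
    unfolding psubset_eq
    using inj_on_image_subset_iff[OF f e(1) T] inj_on_image_eq_iff[OF f e(1) T] by simp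
qed

lemma realizes_edge_relabel_iff:
  assumes f: "inj_on f V" and \<tau>: "bij_betw \<tau> ([V]\<^bsup>2\<^esup>) ([V]\<^bsup>2\<^esup>)"
    and edges: "EF \<subseteq> [V]\<^bsup>2\<^esup>" "EG \<subseteq> [V]\<^bsup>2\<^esup>"
    and images: "(\<lambda>e. f ` e) ` EF = EF'" "\<tau> ` EF = EF'" "\<tau> ` EG = EG'"
    and \<T>: "\<T> \<subseteq> Pow V"
  shows "realizes EF EG \<T> \<longleftrightarrow> realizes EF' EG' (edge_relabel \<tau> f ` \<T>)"
proof -
  let ?\<Phi> = "edge_relabel \<tau> f"
  have \<tau>_into: "\<tau> ` [V]\<^bsup>2\<^esup> \<subseteq> [V]\<^bsup>2\<^esup>"
    using \<tau> unfolding bij_betw_def by simp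
  have inj: "inj_on ?\<Phi> (Pow V)"
    using \<tau> \<tau>_into f by (simp add: bij_betw_def inj_on_edge_relabel)
  have edges_Pow: "EF \<subseteq> Pow V" "EG \<subseteq> Pow V"
    using edges unfolding nsets_def by blast+
  have \<Phi>_\<tau>: "?\<Phi> e = \<tau> e" if "e \<in> EF \<union> EG" for e
    using that edges unfolding edge_relabel_def by (auto simp: in_nsets_2_iff)
  have "?\<Phi> ` EF = \<tau> ` EF" "?\<Phi> ` EG = \<tau> ` EG"
    by (rule image_cong; simp add: \<Phi>_\<tau>)+
  then have \<Phi>_edges: "?\<Phi> ` EF = EF'" "?\<Phi> ` EG = EG'"
    using images(2,3) by simp_all
  have G_part: "EG \<subseteq> \<T> \<longleftrightarrow> EG' \<subseteq> ?\<Phi> ` \<T>"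
    using inj_on_image_subset_iff[OF inj edges_Pow(2) \<T>] \<Phi>_edges(2) by simp
  have "?\<Phi> e \<in> ?\<Phi> ` \<T> \<longleftrightarrow> e \<in> \<T>" if "e \<in> EF" for e
    using inj_on_image_mem_iff[OF inj _ \<T>] that edges_Pow(1) by blast
  then have F_not_built: "(\<forall>e\<in>EF. e \<notin> \<T>) \<longleftrightarrow> (\<forall>e\<in>EF'. e \<notin> ?\<Phi> ` \<T>)"
    unfolding \<Phi>_edges(1)[symmetric] by simp
  have F_covered: "(\<forall>e\<in>EF. \<exists>T\<in>\<T>. e \<subset> T) \<longleftrightarrow> (\<forall>e\<in>EF'. \<exists>T\<in>?\<Phi> ` \<T>. e \<subset> T)"
  proof -
    have "e \<subset> T \<longleftrightarrow> f ` e \<subset> ?\<Phi> T" if "e \<in> EF" "T \<in> \<T>" for e T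
    proof -
      have "e \<subseteq> V" "card e = 2" "T \<subseteq> V"
        using that edges \<T> unfolding nsets_def by auto
      then show ?thesis
        by (rule psubset_iff_image_psubset_edge_relabel[OF f \<tau>_into])
    qed
    then show ?thesis
      unfolding images(1)[symmetric] by auto
  qed
  show ?thesis
    unfolding realizes_def G_part F_not_built F_covered ..
qed

lemma ex_bij_betw_mapping_disjoint_pair:
  assumes "finite U" "A \<union> B \<subseteq> U" "A' \<union> B' \<subseteq> U" "A \<inter> B = {}" "A' \<inter> B' = {}"
    and "card A = card A'" "card B = card B'"
  obtains \<tau> where "bij_betw \<tau> U U" "\<tau> ` A = A'" "\<tau> ` B = B'"
proof -
  have finite: "finite A" "finite B" "finite A'" "finite B'"
    using assms(2,3) finite_subset[OF _ assms(1)] by simp_all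
  obtain g where g: "bij_betw g A A'"
    using finite_same_card_bij[OF finite(1,3) assms(6)] by blast
  obtain h where h: "bij_betw h B B'"
    using finite_same_card_bij[OF finite(2,4) assms(7)] by blast
  have "card (U - (A \<union> B)) = card U - (card A + card B)"
    using assms(2,4) finite by (simp add: card_Diff_subset card_Un_disjoint)
  also have "\<dots> = card (U - (A' \<union> B'))"
    using assms(3,5-7) finite by (simp add: card_Diff_subset card_Un_disjoint)
  finally obtain k where k: "bij_betw k (U - (A \<union> B)) (U - (A' \<union> B'))"
    using finite_same_card_bij[OF finite_Diff[OF assms(1)] finite_Diff[OF assms(1)]] by blast
  define \<tau> where "\<tau> x = (if x \<in> A then g x else if x \<in> B then h x else k x)" for x
  have \<tau>A: "bij_betw \<tau> A A'"
    using g by (rule bij_betw_cong[THEN iffD1, rotated]) (simp add: \<tau>_def)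
  have \<tau>B: "bij_betw \<tau> B B'"
    using h by (rule bij_betw_cong[THEN iffD1, rotated]) (use assms(4) in \<open>auto simp: \<tau>_def\<close>)
  have "bij_betw \<tau> (U - (A \<union> B)) (U - (A' \<union> B'))"
    using k by (rule bij_betw_cong[THEN iffD1, rotated]) (simp add: \<tau>_def)
  then have "bij_betw \<tau> (A \<union> B \<union> (U - (A \<union> B))) (A' \<union> B' \<union> (U - (A' \<union> B')))"
    by (intro bij_betw_combine \<tau>A \<tau>B) (use assms(5) in auto)
  moreover have "A \<union> B \<union> (U - (A \<union> B)) = U" "A' \<union> B' \<union> (U - (A' \<union> B')) = U"
    using assms(2,3) by auto
  ultimately have "bij_betw \<tau> U U"
    by simp
  moreover have "\<tau> ` A = A'" "\<tau> ` B = B'"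
    using \<tau>A \<tau>B by (simp_all add: bij_betw_def)
  ultimately show thesis
    by (rule that)
qed

lemma prob_realizes_edge_relabel:
  assumes V: "V \<subseteq> {1..n}" and f: "bij_betw f V V" and \<tau>: "bij_betw \<tau> ([V]\<^bsup>2\<^esup>) ([V]\<^bsup>2\<^esup>)"
    and edges: "EF \<subseteq> [V]\<^bsup>2\<^esup>" "EG \<subseteq> [V]\<^bsup>2\<^esup>"
    and images: "(\<lambda>e. f ` e) ` EF = EF'" "\<tau> ` EF = EF'" "\<tau> ` EG = EG'"
  shows "measure_pmf.prob (RIG n m p) {R. realizes EF EG (attr_set V R ` {1..m})} =
    measure_pmf.prob (RIG n m p) {R. realizes EF' EG' (attr_set V R ` {1..m})}"
proof -
  let ?\<Phi> = "edge_relabel \<tau> f"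
  let ?\<Psi> = "relabel_columns V ?\<Phi>"
  let ?event = "\<lambda>EF EG. {R. realizes EF EG (attr_set V R ` {1..m})}"
  have finite_V: "finite V"
    using V by (rule finite_subset) simp
  have "\<tau> ` [V]\<^bsup>2\<^esup> \<subseteq> [V]\<^bsup>2\<^esup>"
    using \<tau> by (simp add: bij_betw_def)
  then have \<Phi>: "bij_betw ?\<Phi> (Pow V) (Pow V)" "\<forall>S\<subseteq>V. card (?\<Phi> S) = card S"
    using bij_betw_edge_relabel[OF finite_V f \<tau>] card_edge_relabel[OF bij_betw_imp_inj_on[OF f]]
    by blast+
  have "?\<Phi> S \<subseteq> V" if "S \<subseteq> V" for S
    using \<Phi>(1) that unfolding bij_betw_def by blast
  then have "attr_set V (?\<Psi> R) a = ?\<Phi> (attr_set V R a)" for R a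
    by (rule attr_set_relabel_columns) (simp add: attr_set_def)
  then have "attr_set V (?\<Psi> R) ` {1..m} = ?\<Phi> ` attr_set V R ` {1..m}" for R
    by (simp add: image_image)
  then have "realizes EF EG (attr_set V R ` {1..m}) \<longleftrightarrow>
      realizes EF' EG' (attr_set V (?\<Psi> R) ` {1..m})" for R
    using realizes_edge_relabel_iff[OF bij_betw_imp_inj_on[OF f] \<tau> edges images]
    by (simp add: attr_set_def image_subset_iff)
  then have "?event EF EG = ?\<Psi> -` ?event EF' EG'"
    by auto
  then have "measure_pmf.prob (RIG n m p) (?event EF EG) =
      measure_pmf.prob (map_pmf ?\<Psi> (RIG n m p)) (?event EF' EG')"
    by simp
  also have "map_pmf ?\<Psi> (RIG n m p) = RIG n m p"
    by (rule map_pmf_relabel_columns_RIG[OF V \<Phi>])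
  finally show ?thesis .
qed

theorem corollary5p3:
  fixes n m :: nat and p :: real and F F' G G' :: graph
  assumes "0 \<le> p" "p \<le> 1"
    and "is_graph n F" "is_graph n F'" "is_graph n G" "is_graph n G'"
    and "verts F' = verts F" "verts G = verts F" "verts G' = verts F"
    and "graph_iso F F'"
    and "card (edges G) = card (edges G')"
    and "edges F \<inter> edges G = {}" "edges F' \<inter> edges G' = {}"
  shows "pi_fam n m p (graph_union F G) (CFG F G) =
         pi_fam n m p (graph_union F' G') (CFG F' G')"
proof -
  define V where "V = verts F"
  have V: "V \<subseteq> {1..n}"
    using assms(3) unfolding V_def is_graph_def by simp
  then have finite_V: "finite V"
    by (rule finite_subset) simp
  have edges: "edges F \<subseteq> [V]\<^bsup>2\<^esup>" "edges G \<subseteq> [V]\<^bsup>2\<^esup>" "edges F' \<subseteq> [V]\<^bsup>2\<^esup>" "edges G' \<subseteq> [V]\<^bsup>2\<^esup>"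
    using is_graph_edges_nsets[OF assms(3)] is_graph_edges_nsets[OF assms(5)]
      is_graph_edges_nsets[OF assms(4)] is_graph_edges_nsets[OF assms(6)]
    unfolding assms(7-9) V_def by simp_all
  obtain f where f: "bij_betw f V V" and f_edges: "(\<lambda>e. f ` e) ` edges F = edges F'"
    by (rule graph_iso_edges_image[OF assms(10,3,4), unfolded assms(7) V_def[symmetric]])
  have "finite ([V]\<^bsup>2\<^esup>)" "edges F \<union> edges G \<subseteq> [V]\<^bsup>2\<^esup>" "edges F' \<union> edges G' \<subseteq> [V]\<^bsup>2\<^esup>"
    using finite_imp_finite_nsets[OF finite_V] edges by auto
  then obtain \<tau> where \<tau>: "bij_betw \<tau> ([V]\<^bsup>2\<^esup>) ([V]\<^bsup>2\<^esup>)"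
    and \<tau>_edges: "\<tau> ` edges F = edges F'" "\<tau> ` edges G = edges G'"
    using ex_bij_betw_mapping_disjoint_pair assms(11-13) graph_iso_card_edges[OF assms(10,3,4)]
    by metis
  have pi_fam_eq: "pi_fam n m p (graph_union H K) (CFG H K) =
      measure_pmf.prob (RIG n m p) {R. realizes (edges H) (edges K) (attr_set V R ` {1..m})}"
    if "verts H = V" "verts K = V" "edges H \<subseteq> [V]\<^bsup>2\<^esup>" "edges K \<subseteq> [V]\<^bsup>2\<^esup>" for H K
    using pi_fam_CFG_eq_prob_realizes[of H K n m p] that finite_V unfolding nsets_def by auto
  show ?thesis
    using prob_realizes_edge_relabel[OF V f \<tau> edges(1,2) f_edges \<tau>_edges] pi_fam_eq edges assms(7-9)
    unfolding V_def by simp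
qed

end
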